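(* Let $\varphi:A\to B$ be a continuous unital algebra homomorphism between unital Banach algebras which admits a continuous linear section $s:B\to A$, $\varphi\circ s=1_B$. Then for every $n\ge1$ the induced group homomorphism $\varphi(\Delta):GL(C^2_0(\Delta^n,A))\to GL(C^2_0(\Delta^n,B))$, $\sigma\mapsto\varphi\circ\sigma$, is surjective.
   Context: $\Delta^n=\{t\in[0,1]^n:\sum t_i\le1\}$, $\mathbf 0$ its origin vertex; $C^2(\Delta^n,A)$ the Banach algebra of $C^2$ maps $\Delta^n\to A$ (norm: sup norm plus sup norms of first and second partial derivatives); for a unital ring $R$, $GL(R)=\bigcup_mGL_m(R)$; $GL(C^2_0(\Delta^n,A))=\{\sigma\in GL(C^2(\Delta^n,A)):\sigma(\mathbf 0)=1\}$. *)

theory Defs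
  imports "HOL-Analysis.Analysis"
begin

definition std_simplex :: "(real ^ 'n) set" where
  "std_simplex = {t. (\<forall>i. 0 \<le> t $ i) \<and> (\<Sum>i\<in>UNIV. t $ i) \<le> 1}"

definition C2_on :: "(real ^ 'n) set \<Rightarrow> (real ^ 'n \<Rightarrow> 'a::real_normed_vector) \<Rightarrow> bool" where
  "C2_on S f \<longleftrightarrow>
     (\<exists>f' :: real ^ 'n \<Rightarrow> ((real ^ 'n) \<Rightarrow>\<^sub>L 'a).
      \<exists>f'' :: real ^ 'n \<Rightarrow> ((real ^ 'n) \<Rightarrow>\<^sub>L ((real ^ 'n) \<Rightarrow>\<^sub>L 'a)).
        (\<forall>x\<in>S. (f has_derivative blinfun_apply (f' x)) (at x within S)) \<and>
        continuous_on S f' \<and>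
        (\<forall>x\<in>S. (f' has_derivative blinfun_apply (f'' x)) (at x within S)) \<and>
        continuous_on S f'')"

text \<open>GL_m(C^2_0(\<Delta>^n, A)): m x m matrices (entries indexed by i, j < m) of C^2 maps
  \<Delta>^n \<rightarrow> A, invertible in the matrix ring over C^2(\<Delta>^n, A), with value the identity matrix
  at the origin vertex.\<close>
definition GL0_C2 :: "nat \<Rightarrow> (nat \<Rightarrow> nat \<Rightarrow> real ^ 'n \<Rightarrow> 'a::real_normed_algebra_1) set" where
  "GL0_C2 m = {\<sigma>.
     (\<forall>i<m. \<forall>j<m. C2_on std_simplex (\<sigma> i j)) \<and>
     (\<forall>i<m. \<forall>j<m. \<sigma> i j 0 = (if i = j then 1 else 0)) \<and>
     (\<exists>\<tau>. (\<forall>i<m. \<forall>j<m. C2_on std_simplex (\<tau> i j)) \<and>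
          (\<forall>x\<in>std_simplex. \<forall>i<m. \<forall>j<m.
              (\<Sum>k<m. \<sigma> i k x * \<tau> k j x) = (if i = j then 1 else 0) \<and>
              (\<Sum>k<m. \<tau> i k x * \<sigma> k j x) = (if i = j then 1 else 0)))}"

end

theory Submission
  imports Defs
begin

text \<open>Let \<open>\<rho>\<close> be the inverse of \<open>\<tau>\<close>. The simplex is star-shaped about the origin, so \<open>\<tau>\<close> is lifted
  along the rays \<open>x \<mapsto> t x\<close>, starting from the identity matrix, which lifts \<open>\<tau> 0 = 1\<close>. For a fine
  partition \<open>t\<^sub>0 = 0 < \<dots> < t\<^sub>N = 1\<close> the matrices
  \<open>A = s ((\<tau>(t\<^sub>k x) - \<tau>(t\<^sub>k\<^sub>+\<^sub>1 x)) \<rho>(t\<^sub>k x))\<close> are uniformly small, by uniform continuity on the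
  compact simplex, so \<open>1 - A\<close> is invertible through its Neumann series. Its inverse is again \<open>C\<^sup>2\<close>: the
  identity \<open>G y = G x - G y (F y - F x) G x\<close> between a matrix function \<open>F\<close> and its bounded inverse
  \<open>G\<close> shows first that \<open>G\<close> is continuous and then that it is differentiable with derivative
  \<open>-G F' G\<close>. Since \<open>\<phi>\<close> maps \<open>1 - A\<close> to \<open>\<tau>(t\<^sub>k\<^sub>+\<^sub>1 x) \<rho>(t\<^sub>k x)\<close>, multiplying a lift of
  \<open>\<tau>(t\<^sub>k \<cdot>)\<close> by \<open>1 - A\<close> gives a lift of \<open>\<tau>(t\<^sub>k\<^sub>+\<^sub>1 \<cdot>)\<close>.\<close>

section \<open>Continuously differentiable maps\<close>

definition C1_deriv_on ::
    "('v::real_normed_vector) set \<Rightarrow> ('v \<Rightarrow> 'a::real_normed_vector) \<Rightarrow> ('v \<Rightarrow> ('v \<Rightarrow>\<^sub>L 'a)) \<Rightarrow> bool" where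
  "C1_deriv_on S f f' \<longleftrightarrow>
     (\<forall>x\<in>S. (f has_derivative blinfun_apply (f' x)) (at x within S)) \<and> continuous_on S f'"

definition C1_on :: "('v::real_normed_vector) set \<Rightarrow> ('v \<Rightarrow> 'a::real_normed_vector) \<Rightarrow> bool" where
  "C1_on S f \<longleftrightarrow> (\<exists>f'. C1_deriv_on S f f')"

lemma C2_on_iff_C1_deriv_on: "C2_on S f \<longleftrightarrow> (\<exists>f'. C1_deriv_on S f f' \<and> C1_on S f')"
  by (auto simp: C2_on_def C1_on_def C1_deriv_on_def)

lemma C2_onI: "C1_deriv_on S f f' \<Longrightarrow> C1_on S f' \<Longrightarrow> C2_on S f"
  unfolding C2_on_iff_C1_deriv_on by blast

lemma C2_onE:
  assumes "C2_on S f"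
  obtains f' where "C1_deriv_on S f f'" "C1_on S f'"
  using assms unfolding C2_on_iff_C1_deriv_on by blast

lemma C1_onE:
  assumes "C1_on S f"
  obtains f' where "C1_deriv_on S f f'"
  using assms unfolding C1_on_def by blast

lemma C1_deriv_on_imp_continuous_on: "C1_deriv_on S f f' \<Longrightarrow> continuous_on S f"
  unfolding C1_deriv_on_def continuous_on_eq_continuous_within
  by (auto intro: has_derivative_continuous)

lemma C1_deriv_on_const: "C1_deriv_on S (\<lambda>x. c) (\<lambda>x. 0)"
  by (simp add: C1_deriv_on_def zero_blinfun.rep_eq)

lemma C1_deriv_on_add:
  "C1_deriv_on S f f' \<Longrightarrow> C1_deriv_on S g g' \<Longrightarrow> C1_deriv_on S (\<lambda>x. f x + g x) (\<lambda>x. f' x + g' x)"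
  unfolding C1_deriv_on_def
  by (auto intro!: has_derivative_add continuous_on_add simp: plus_blinfun.rep_eq)

lemma C1_deriv_on_bilinear:
  assumes B: "bounded_bilinear B" and f: "C1_deriv_on S f f'" and g: "C1_deriv_on S g g'"
  shows "C1_deriv_on S (\<lambda>x. B (f x) (g x))
     (\<lambda>x. (bounded_bilinear.prod_right B (f x) o\<^sub>L g' x) + (bounded_bilinear.prod_left B (g x) o\<^sub>L f' x))"
proof -
  interpret B: bounded_bilinear B by fact
  have cf: "continuous_on S f" and cg: "continuous_on S g"
    using f g by (auto intro: C1_deriv_on_imp_continuous_on)
  show ?thesis unfolding C1_deriv_on_def
  proof safe
    fix x assume "x \<in> S"
    then have "((\<lambda>x. B (f x) (g x)) has_derivative (\<lambda>h. B (f x) (g' x h) + B (f' x h) (g x))) (at x within S)"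
      using f g unfolding C1_deriv_on_def by (auto intro!: B.FDERIV)
    then show "((\<lambda>x. B (f x) (g x)) has_derivative
       blinfun_apply ((B.prod_right (f x) o\<^sub>L g' x) + (B.prod_left (g x) o\<^sub>L f' x))) (at x within S)"
      by (rule has_derivative_eq_rhs) (auto simp: plus_blinfun.rep_eq B.prod_right.rep_eq B.prod_left.rep_eq)
  next
    have "continuous_on S (\<lambda>x. B.prod_right (f x))" "continuous_on S (\<lambda>x. B.prod_left (g x))"
      by (rule bounded_linear.continuous_on[OF B.bounded_linear_prod_right cf]
          bounded_linear.continuous_on[OF B.bounded_linear_prod_left cg])+
    then show "continuous_on S (\<lambda>x. (B.prod_right (f x) o\<^sub>L g' x) + (B.prod_left (g x) o\<^sub>L f' x))"
      using f g unfolding C1_deriv_on_def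
      by (intro continuous_on_add bounded_bilinear.continuous_on[OF bounded_bilinear_blinfun_compose]) auto
  qed
qed

lemma C1_deriv_on_linear:
  assumes L: "bounded_linear L" and f: "C1_deriv_on S f f'"
  shows "C1_deriv_on S (\<lambda>x. L (f x)) (\<lambda>x. Blinfun L o\<^sub>L f' x)"
  using f unfolding C1_deriv_on_def
  by (auto intro!: has_derivative_eq_rhs[OF bounded_linear.has_derivative[OF L]]
      bounded_bilinear.continuous_on[OF bounded_bilinear_blinfun_compose]
      simp: bounded_linear_Blinfun_apply[OF L] o_def)

lemma C1_deriv_on_compose_scaleR:
  assumes f: "C1_deriv_on T f f'" and ST: "\<And>x. x \<in> S \<Longrightarrow> c *\<^sub>R x \<in> T"
  shows "C1_deriv_on S (\<lambda>x. f (c *\<^sub>R x)) (\<lambda>x. c *\<^sub>R f' (c *\<^sub>R x))"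
  unfolding C1_deriv_on_def
proof safe
  fix x assume x: "x \<in> S"
  have "((\<lambda>x. c *\<^sub>R x) has_derivative (\<lambda>h. c *\<^sub>R h)) (at x within S)"
    by (auto intro!: derivative_eq_intros)
  moreover have "(f has_derivative blinfun_apply (f' (c *\<^sub>R x))) (at (c *\<^sub>R x) within ((\<lambda>x. c *\<^sub>R x) ` S))"
    using f x ST unfolding C1_deriv_on_def by (auto intro: has_derivative_subset)
  ultimately have "((\<lambda>x. f (c *\<^sub>R x)) has_derivative (\<lambda>h. f' (c *\<^sub>R x) (c *\<^sub>R h))) (at x within S)"
    by (rule has_derivative_in_compose)
  then show "((\<lambda>x. f (c *\<^sub>R x)) has_derivative blinfun_apply (c *\<^sub>R f' (c *\<^sub>R x))) (at x within S)"
    by (simp add: scaleR_blinfun.rep_eq blinfun.scaleR_right)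
next
  have "continuous_on S (\<lambda>x. f' (c *\<^sub>R x))"
    using f unfolding C1_deriv_on_def
    by (intro continuous_on_compose2[where f = "\<lambda>x. c *\<^sub>R x" and g = f' and t = T])
       (auto intro!: continuous_intros ST)
  then show "continuous_on S (\<lambda>x. c *\<^sub>R f' (c *\<^sub>R x))"
    by (intro continuous_intros)
qed

lemma C1_on_const: "C1_on S (\<lambda>x. c)"
  unfolding C1_on_def by (blast intro: C1_deriv_on_const)

lemma C1_on_add: "C1_on S f \<Longrightarrow> C1_on S g \<Longrightarrow> C1_on S (\<lambda>x. f x + g x)"
  unfolding C1_on_def by (blast intro: C1_deriv_on_add)

lemma C1_on_bilinear: "bounded_bilinear B \<Longrightarrow> C1_on S f \<Longrightarrow> C1_on S g \<Longrightarrow> C1_on S (\<lambda>x. B (f x) (g x))"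
  unfolding C1_on_def by (blast intro: C1_deriv_on_bilinear)

lemma C1_on_linear: "bounded_linear L \<Longrightarrow> C1_on S f \<Longrightarrow> C1_on S (\<lambda>x. L (f x))"
  unfolding C1_on_def by (blast intro: C1_deriv_on_linear)

lemma C1_on_minus: "C1_on S f \<Longrightarrow> C1_on S (\<lambda>x. - f x)"
  by (rule C1_on_linear[OF bounded_linear_minus[OF bounded_linear_ident]])

lemma C1_on_sum: "finite I \<Longrightarrow> (\<And>i. i \<in> I \<Longrightarrow> C1_on S (f i)) \<Longrightarrow> C1_on S (\<lambda>x. \<Sum>i\<in>I. f i x)"
  by (induction I rule: finite_induct) (auto intro: C1_on_const C1_on_add)

lemma C2_on_imp_continuous_on: "C2_on S f \<Longrightarrow> continuous_on S f"
  by (elim C2_onE C1_deriv_on_imp_continuous_on)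

lemma C2_on_const: "C2_on S (\<lambda>x. c)"
  by (rule C2_onI[OF C1_deriv_on_const C1_on_const])

lemma C2_on_add: "C2_on S f \<Longrightarrow> C2_on S g \<Longrightarrow> C2_on S (\<lambda>x. f x + g x)"
  by (elim C2_onE) (blast intro: C2_onI C1_deriv_on_add C1_on_add)

lemma C2_on_bilinear:
  assumes B: "bounded_bilinear B" and f: "C2_on S f" and g: "C2_on S g"
  shows "C2_on S (\<lambda>x. B (f x) (g x))"
proof -
  interpret B: bounded_bilinear B by fact
  obtain f' g' where f': "C1_deriv_on S f f'" "C1_on S f'" and g': "C1_deriv_on S g g'" "C1_on S g'"
    using f g by (elim C2_onE)
  have "C1_on S f" "C1_on S g"
    using f' g' unfolding C1_on_def by blast+
  then have "C1_on S (\<lambda>x. (B.prod_right (f x) o\<^sub>L g' x) + (B.prod_left (g x) o\<^sub>L f' x))"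
    using f' g'
    by (intro C1_on_add C1_on_bilinear[OF bounded_bilinear_blinfun_compose]
        C1_on_linear[OF B.bounded_linear_prod_right] C1_on_linear[OF B.bounded_linear_prod_left])
  then show ?thesis
    by (rule C2_onI[OF C1_deriv_on_bilinear[OF B f'(1) g'(1)]])
qed

lemma C2_on_linear:
  assumes L: "bounded_linear L" and f: "C2_on S f"
  shows "C2_on S (\<lambda>x. L (f x))"
proof -
  obtain f' where "C1_deriv_on S f f'" "C1_on S f'"
    using f by (elim C2_onE)
  then show ?thesis
    by (intro C2_onI[OF C1_deriv_on_linear[OF L]]
        C1_on_linear[OF bounded_bilinear.bounded_linear_right[OF bounded_bilinear_blinfun_compose]])
qed

lemma C2_on_diff: "C2_on S f \<Longrightarrow> C2_on S g \<Longrightarrow> C2_on S (\<lambda>x. f x - g x)"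
  using C2_on_add[of S f "\<lambda>x. - g x"] C2_on_linear[OF bounded_linear_minus[OF bounded_linear_ident]]
  by fastforce

lemma C2_on_mult: "C2_on S f \<Longrightarrow> C2_on S g \<Longrightarrow> C2_on S (\<lambda>x. f x * g x :: 'a::real_normed_algebra)"
  by (rule C2_on_bilinear[OF bounded_bilinear_mult])

lemma C2_on_sum: "finite I \<Longrightarrow> (\<And>i. i \<in> I \<Longrightarrow> C2_on S (f i)) \<Longrightarrow> C2_on S (\<lambda>x. \<Sum>i\<in>I. f i x)"
  by (induction I rule: finite_induct) (auto intro: C2_on_const C2_on_add)

lemma C2_on_compose_scaleR:
  assumes f: "C2_on T f" and ST: "\<And>x. x \<in> S \<Longrightarrow> c *\<^sub>R x \<in> T"
  shows "C2_on S (\<lambda>x. f (c *\<^sub>R x))"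
proof -
  obtain f' f'' where f': "C1_deriv_on T f f'" and f'': "C1_deriv_on T f' f''"
    using f by (elim C2_onE C1_onE)
  have "C1_on S (\<lambda>x. f' (c *\<^sub>R x))"
    unfolding C1_on_def using C1_deriv_on_compose_scaleR[OF f'' ST] by blast
  then have "C1_on S (\<lambda>x. c *\<^sub>R f' (c *\<^sub>R x))"
    by (rule C1_on_linear[OF bounded_linear_scaleR_right])
  with C1_deriv_on_compose_scaleR[OF f' ST] show ?thesis
    by (rule C2_onI)
qed

section \<open>Square matrices over a normed algebra\<close>

definition mat_mult :: "nat \<Rightarrow> (nat \<Rightarrow> nat \<Rightarrow> 'a::semiring_0) \<Rightarrow> (nat \<Rightarrow> nat \<Rightarrow> 'a) \<Rightarrow> nat \<Rightarrow> nat \<Rightarrow> 'a" where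
  "mat_mult m X Y = (\<lambda>i j. \<Sum>k<m. X i k * Y k j)"

definition mat_one :: "nat \<Rightarrow> nat \<Rightarrow> 'a::{zero,one}" where
  "mat_one = (\<lambda>i j. if i = j then 1 else 0)"

definition mat_norm :: "nat \<Rightarrow> (nat \<Rightarrow> nat \<Rightarrow> 'a::real_normed_vector) \<Rightarrow> real" where
  "mat_norm m X = (\<Sum>i<m. \<Sum>j<m. norm (X i j))"

primrec mat_pow :: "nat \<Rightarrow> (nat \<Rightarrow> nat \<Rightarrow> 'a::semiring_1) \<Rightarrow> nat \<Rightarrow> nat \<Rightarrow> nat \<Rightarrow> 'a" where
  "mat_pow m X 0 = mat_one"
| "mat_pow m X (Suc n) = mat_mult m X (mat_pow m X n)"

definition mat_inverses :: "nat \<Rightarrow> (nat \<Rightarrow> nat \<Rightarrow> 'a::semiring_1) \<Rightarrow> (nat \<Rightarrow> nat \<Rightarrow> 'a) \<Rightarrow> bool" where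
  "mat_inverses m X Y \<longleftrightarrow>
     (\<forall>i<m. \<forall>j<m. mat_mult m X Y i j = mat_one i j \<and> mat_mult m Y X i j = mat_one i j)"

lemma mat_mult_assoc: "mat_mult m (mat_mult m X Y) Z i j = mat_mult m X (mat_mult m Y Z) i j"
  unfolding mat_mult_def
  by (simp add: sum_distrib_left sum_distrib_right mult.assoc) (rule sum.swap)

lemma mat_mult_one_left: "i < m \<Longrightarrow> mat_mult m mat_one X i j = (X i j :: 'a::semiring_1)"
  by (simp add: mat_mult_def mat_one_def if_distrib[of "\<lambda>a. a * _"] sum.delta cong: if_cong)

lemma mat_mult_one_right: "j < m \<Longrightarrow> mat_mult m X mat_one i j = (X i j :: 'a::semiring_1)"
  by (simp add: mat_mult_def mat_one_def if_distrib[of "\<lambda>a. _ * a"] sum.delta' cong: if_cong)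

lemma mat_mult_cong:
  "(\<And>k. k < m \<Longrightarrow> X i k = X' i k) \<Longrightarrow> (\<And>k. k < m \<Longrightarrow> Y k j = Y' k j) \<Longrightarrow>
    mat_mult m X Y i j = mat_mult m X' Y' i j"
  unfolding mat_mult_def by (intro sum.cong) auto

lemma mat_mult_diff_left:
  "mat_mult m (\<lambda>i j. X i j - X' i j) Y i j = mat_mult m X Y i j - (mat_mult m X' Y i j :: 'a::ring)"
  by (simp add: mat_mult_def left_diff_distrib sum_subtractf)

lemma mat_mult_diff_right:
  "mat_mult m X (\<lambda>i j. Y i j - Y' i j) i j = mat_mult m X Y i j - (mat_mult m X Y' i j :: 'a::ring)"
  by (simp add: mat_mult_def right_diff_distrib sum_subtractf)

lemma mat_pow_commute: "i < m \<Longrightarrow> j < m \<Longrightarrow> mat_mult m (mat_pow m X n) X i j = mat_pow m X (Suc n) i j"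
proof (induction n arbitrary: i j)
  case 0
  then show ?case by (simp add: mat_mult_one_left mat_mult_one_right)
next
  case (Suc n)
  have "mat_mult m (mat_pow m X (Suc n)) X i j = mat_mult m X (mat_mult m (mat_pow m X n) X) i j"
    by (simp add: mat_mult_assoc)
  also have "\<dots> = mat_mult m X (mat_pow m X (Suc n)) i j"
    using Suc by (intro mat_mult_cong) auto
  also have "\<dots> = mat_pow m X (Suc (Suc n)) i j"
    by simp
  finally show ?case .
qed

lemma mat_inverses_mult:
  fixes A B C D :: "nat \<Rightarrow> nat \<Rightarrow> 'a::ring_1"
  assumes "mat_inverses m A B" and "mat_inverses m C D"
  shows "mat_inverses m (mat_mult m A C) (mat_mult m D B)"
proof -
  have cancel: "mat_mult m (mat_mult m X Y) (mat_mult m Y' X') i j = mat_one i j"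
    if "mat_inverses m X X'" "mat_inverses m Y Y'" "i < m" "j < m" for X X' Y Y' :: "nat \<Rightarrow> nat \<Rightarrow> 'a" and i j
  proof -
    have "mat_mult m (mat_mult m X Y) (mat_mult m Y' X') i j = mat_mult m X (mat_mult m Y (mat_mult m Y' X')) i j"
      by (rule mat_mult_assoc)
    also have "\<dots> = mat_mult m X (mat_mult m (mat_mult m Y Y') X') i j"
      by (intro mat_mult_cong refl mat_mult_assoc[symmetric])
    also have "\<dots> = mat_mult m X (mat_mult m mat_one X') i j"
      using that(2,4) unfolding mat_inverses_def by (intro mat_mult_cong) auto
    also have "\<dots> = mat_mult m X X' i j"
      by (intro mat_mult_cong refl mat_mult_one_left)
    also have "\<dots> = mat_one i j"
      using that by (simp add: mat_inverses_def)
    finally show ?thesis .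
  qed
  show ?thesis
    using assms by (auto simp: mat_inverses_def intro!: cancel)
qed

lemma norm_le_mat_norm: "i < m \<Longrightarrow> j < m \<Longrightarrow> norm (X i j) \<le> mat_norm m X"
  unfolding mat_norm_def
  by (rule order_trans[OF member_le_sum[of j] member_le_sum[of i]]) (auto intro: sum_nonneg)

lemma mat_norm_nonneg: "0 \<le> mat_norm m X"
  unfolding mat_norm_def by (intro sum_nonneg norm_ge_zero)

lemma mat_norm_mult_le:
  fixes X Y :: "nat \<Rightarrow> nat \<Rightarrow> 'a::real_normed_algebra"
  shows "mat_norm m (mat_mult m X Y) \<le> mat_norm m X * mat_norm m Y"
proof -
  have "mat_norm m (mat_mult m X Y) \<le> (\<Sum>i<m. \<Sum>j<m. \<Sum>k<m. norm (X i k) * norm (Y k j))"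
    unfolding mat_norm_def mat_mult_def
    by (intro sum_mono order_trans[OF norm_sum] norm_mult_ineq)
  also have "\<dots> = (\<Sum>i<m. \<Sum>k<m. norm (X i k) * (\<Sum>j<m. norm (Y k j)))"
    by (simp add: sum_distrib_left) (intro sum.cong refl sum.swap)
  also have "\<dots> \<le> (\<Sum>i<m. \<Sum>k<m. norm (X i k) * mat_norm m Y)"
    unfolding mat_norm_def
    by (intro sum_mono mult_left_mono member_le_sum[where f = "\<lambda>k. \<Sum>j<m. norm (Y k j)"] sum_nonneg) auto
  also have "\<dots> = mat_norm m X * mat_norm m Y"
    by (simp add: mat_norm_def sum_distrib_right)
  finally show ?thesis .
qed

lemma mat_norm_one: "mat_norm m (mat_one :: nat \<Rightarrow> nat \<Rightarrow> 'a::real_normed_algebra_1) = real m"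
  by (simp add: mat_norm_def mat_one_def if_distrib[of norm] sum.delta cong: if_cong)

lemma mat_norm_pow_le:
  fixes X :: "nat \<Rightarrow> nat \<Rightarrow> 'a::real_normed_algebra_1"
  shows "mat_norm m (mat_pow m X n) \<le> real m * mat_norm m X ^ n"
proof (induction n)
  case 0
  then show ?case by (simp add: mat_norm_one)
next
  case (Suc n)
  have "mat_norm m (mat_pow m X (Suc n)) \<le> mat_norm m X * mat_norm m (mat_pow m X n)"
    by (simp add: mat_norm_mult_le)
  also have "\<dots> \<le> mat_norm m X * (real m * mat_norm m X ^ n)"
    by (intro mult_left_mono Suc.IH mat_norm_nonneg)
  finally show ?case by (simp add: algebra_simps)
qed

lemma mat_norm_map_le:
  assumes "\<And>y. norm (L y) \<le> norm y * K"
  shows "mat_norm m (\<lambda>i j. L (X i j)) \<le> K * mat_norm m X"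
  unfolding mat_norm_def sum_distrib_left
  by (intro sum_mono) (use assms in \<open>simp add: mult.commute\<close>)

lemma mat_norm_le_entrywise:
  "(\<And>i j. i < m \<Longrightarrow> j < m \<Longrightarrow> norm (X i j) \<le> C) \<Longrightarrow> mat_norm m X \<le> real m * real m * C"
  unfolding mat_norm_def
  using sum_mono[of "{..<m}" "\<lambda>i. \<Sum>j<m. norm (X i j)" "\<lambda>i. real m * C"] sum_mono[of "{..<m}" "\<lambda>j. norm (X _ j)" "\<lambda>j. C"]
  by (simp add: mult.assoc)

lemma mat_mult_map:
  assumes "bounded_linear \<phi>" and "\<And>x y. \<phi> (x * y) = \<phi> x * \<phi> y"
  shows "\<phi> (mat_mult m X Y i j) = mat_mult m (\<lambda>i j. \<phi> (X i j)) (\<lambda>i j. \<phi> (Y i j)) i j"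
  using assms by (simp add: mat_mult_def linear_sum bounded_linear.linear)

definition mat_neumann :: "nat \<Rightarrow> (nat \<Rightarrow> nat \<Rightarrow> 'a::real_normed_algebra_1) \<Rightarrow> nat \<Rightarrow> nat \<Rightarrow> 'a" where
  "mat_neumann m A i j = (\<Sum>n. mat_pow m A n i j)"

lemma norm_mat_pow_le:
  fixes A :: "nat \<Rightarrow> nat \<Rightarrow> 'a::real_normed_algebra_1"
  shows "i < m \<Longrightarrow> j < m \<Longrightarrow> norm (mat_pow m A n i j) \<le> real m * mat_norm m A ^ n"
  using norm_le_mat_norm[of i m j "mat_pow m A n"] mat_norm_pow_le[of m A n] by linarith

lemma summable_mat_pow:
  fixes A :: "nat \<Rightarrow> nat \<Rightarrow> 'a::{banach,real_normed_algebra_1}"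
  assumes "mat_norm m A < 1" "i < m" "j < m"
  shows "summable (\<lambda>n. mat_pow m A n i j)"
  using assms mat_norm_nonneg[of m A]
  by (intro summable_comparison_test'[OF summable_mult[OF summable_geometric] norm_mat_pow_le]) auto

lemma norm_mat_neumann_le:
  fixes A :: "nat \<Rightarrow> nat \<Rightarrow> 'a::{banach,real_normed_algebra_1}"
  assumes "mat_norm m A < 1" "i < m" "j < m"
  shows "norm (mat_neumann m A i j) \<le> real m / (1 - mat_norm m A)"
proof -
  have q: "norm (mat_norm m A) < 1"
    using assms(1) mat_norm_nonneg[of m A] by simp
  have "norm (mat_neumann m A i j) \<le> (\<Sum>n. real m * mat_norm m A ^ n)"
    unfolding mat_neumann_def
    by (rule norm_suminf_le[OF norm_mat_pow_le[OF assms(2,3)] summable_mult[OF summable_geometric[OF q]]])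
  also have "\<dots> = real m / (1 - mat_norm m A)"
    using suminf_geometric[OF q] by (simp add: suminf_mult[OF summable_geometric[OF q]])
  finally show ?thesis .
qed

lemma mat_mult_suminf_right:
  fixes X :: "nat \<Rightarrow> nat \<Rightarrow> 'a::{banach,real_normed_algebra}"
  assumes "\<And>k. k < m \<Longrightarrow> summable (\<lambda>n. Y n k j)"
  shows "mat_mult m X (\<lambda>i j. \<Sum>n. Y n i j) i j = (\<Sum>n. mat_mult m X (Y n) i j)"
proof -
  have "(\<Sum>n. \<Sum>k<m. X i k * Y n k j) = (\<Sum>k<m. \<Sum>n. X i k * Y n k j)"
    by (rule suminf_sum) (auto intro: summable_mult assms)
  then show ?thesis
    unfolding mat_mult_def using assms by (simp add: suminf_mult)
qed

lemma mat_mult_suminf_left: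
  fixes Y :: "nat \<Rightarrow> nat \<Rightarrow> 'a::{banach,real_normed_algebra}"
  assumes "\<And>k. k < m \<Longrightarrow> summable (\<lambda>n. X n i k)"
  shows "mat_mult m (\<lambda>i j. \<Sum>n. X n i j) Y i j = (\<Sum>n. mat_mult m (X n) Y i j)"
proof -
  have "(\<Sum>n. \<Sum>k<m. X n i k * Y k j) = (\<Sum>k<m. \<Sum>n. X n i k * Y k j)"
    by (rule suminf_sum) (auto intro: summable_mult2 assms)
  then show ?thesis
    unfolding mat_mult_def using assms by (simp add: suminf_mult2)
qed

lemma mat_inverses_neumann:
  fixes A :: "nat \<Rightarrow> nat \<Rightarrow> 'a::{banach,real_normed_algebra_1}"
  assumes A: "mat_norm m A < 1"
  shows "mat_inverses m (\<lambda>i j. mat_one i j - A i j) (mat_neumann m A)"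
  unfolding mat_inverses_def
proof (intro allI impI conjI)
  fix i j assume ij: "i < m" "j < m"
  have sum: "summable (\<lambda>n. mat_pow m A n k l)" if "k < m" "l < m" for k l
    using summable_mat_pow[OF A that] .
  have tail: "(\<Sum>n. mat_pow m A (Suc n) i j) = mat_neumann m A i j - mat_one i j"
    unfolding mat_neumann_def using suminf_split_head[OF sum[OF ij]] by simp
  have "mat_mult m A (mat_neumann m A) i j = (\<Sum>n. mat_mult m A (mat_pow m A n) i j)"
    unfolding mat_neumann_def[abs_def] using sum ij by (intro mat_mult_suminf_right) auto
  then have "mat_mult m A (mat_neumann m A) i j = mat_neumann m A i j - mat_one i j"
    unfolding mat_pow.simps(2)[symmetric] tail .
  then show "mat_mult m (\<lambda>i j. mat_one i j - A i j) (mat_neumann m A) i j = mat_one i j"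
    using ij by (simp add: mat_mult_diff_left mat_mult_one_left)
  have "mat_mult m (mat_neumann m A) A i j = (\<Sum>n. mat_mult m (mat_pow m A n) A i j)"
    unfolding mat_neumann_def[abs_def] using sum ij by (intro mat_mult_suminf_left) auto
  also have "\<dots> = (\<Sum>n. mat_pow m A (Suc n) i j)"
    using ij by (simp only: mat_pow_commute)
  finally have "mat_mult m (mat_neumann m A) A i j = mat_neumann m A i j - mat_one i j"
    unfolding tail .
  then show "mat_mult m (mat_neumann m A) (\<lambda>i j. mat_one i j - A i j) i j = mat_one i j"
    using ij by (simp add: mat_mult_diff_right mat_mult_one_right)
qed

section \<open>Inverses of \<open>C\<^sup>2\<close> matrix functions\<close>

lemma mat_inverses_diff:
  fixes X Y X' Y' :: "nat \<Rightarrow> nat \<Rightarrow> 'a::ring_1"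
  assumes XY: "\<And>i j. i < m \<Longrightarrow> j < m \<Longrightarrow> mat_mult m X Y i j = mat_one i j"
    and Y'X': "\<And>i j. i < m \<Longrightarrow> j < m \<Longrightarrow> mat_mult m Y' X' i j = mat_one i j"
    and ij: "i < m" "j < m"
  shows "Y' i j - Y i j = - mat_mult m Y' (mat_mult m (\<lambda>i j. X' i j - X i j) Y) i j"
proof -
  have "mat_mult m Y' (mat_mult m (\<lambda>i j. X' i j - X i j) Y) i j
      = mat_mult m Y' (\<lambda>i j. mat_mult m X' Y i j - mat_mult m X Y i j) i j"
    by (intro mat_mult_cong refl mat_mult_diff_left)
  also have "\<dots> = mat_mult m (mat_mult m Y' X') Y i j - mat_mult m Y' (mat_mult m X Y) i j"
    by (simp add: mat_mult_diff_right mat_mult_assoc)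
  also have "\<dots> = mat_mult m mat_one Y i j - mat_mult m Y' mat_one i j"
    using XY Y'X' ij by (intro arg_cong2[where f = minus] mat_mult_cong) auto
  also have "\<dots> = Y i j - Y' i j"
    using ij by (simp add: mat_mult_one_left mat_mult_one_right)
  finally show ?thesis by simp
qed

lemma continuous_on_mat_inverse:
  fixes F G :: "nat \<Rightarrow> nat \<Rightarrow> 'v::topological_space \<Rightarrow> 'a::real_normed_algebra_1"
  assumes F: "\<And>i j. i < m \<Longrightarrow> j < m \<Longrightarrow> continuous_on S (F i j)"
    and inv: "\<And>x. x \<in> S \<Longrightarrow> mat_inverses m (\<lambda>i j. F i j x) (\<lambda>i j. G i j x)"
    and bound: "\<And>x. x \<in> S \<Longrightarrow> mat_norm m (\<lambda>i j. G i j x) \<le> C"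
    and ij: "i < m" "j < m"
  shows "continuous_on S (G i j)"
  unfolding continuous_on_def
proof safe
  fix x assume x: "x \<in> S"
  let ?D = "\<lambda>y. mat_norm m (\<lambda>k l. F k l y - F k l x)"
  have "norm (G i j y - G i j x) \<le> C * (?D y * C)" if y: "y \<in> S" for y
  proof -
    have "norm (G i j y - G i j x)
        = norm (mat_mult m (\<lambda>i j. G i j y) (mat_mult m (\<lambda>k l. F k l y - F k l x) (\<lambda>i j. G i j x)) i j)"
      using mat_inverses_diff[of m "\<lambda>i j. F i j x" "\<lambda>i j. G i j x" "\<lambda>i j. G i j y" "\<lambda>i j. F i j y"] inv x y ij
      by (simp add: mat_inverses_def)
    also have "\<dots> \<le> mat_norm m (mat_mult m (\<lambda>i j. G i j y) (mat_mult m (\<lambda>k l. F k l y - F k l x) (\<lambda>i j. G i j x)))"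
      by (rule norm_le_mat_norm[OF ij])
    also have "\<dots> \<le> mat_norm m (\<lambda>i j. G i j y) * (?D y * mat_norm m (\<lambda>i j. G i j x))"
      by (rule order_trans[OF mat_norm_mult_le mult_left_mono[OF mat_norm_mult_le mat_norm_nonneg]])
    also have "\<dots> \<le> C * (?D y * C)"
    proof (rule mult_mono[OF bound[OF y] mult_left_mono[OF bound[OF x]]])
      show "0 \<le> C" using mat_norm_nonneg bound[OF x] by (rule order_trans)
    qed (simp_all add: mat_norm_nonneg)
    finally show ?thesis .
  qed
  then have "\<forall>\<^sub>F y in at x within S. norm (G i j y - G i j x) \<le> C * (?D y * C)"
    unfolding eventually_at_filter by (auto intro: always_eventually)
  moreover have "((\<lambda>y. C * (?D y * C)) \<longlongrightarrow> 0) (at x within S)"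
  proof -
    have "((\<lambda>y. F k l y) \<longlongrightarrow> F k l x) (at x within S)" if "k < m" "l < m" for k l
      using F[OF that] x by (simp add: continuous_on_def)
    then have "((\<lambda>y. C * (?D y * C)) \<longlongrightarrow> C * (mat_norm m (\<lambda>k l. F k l x - F k l x) * C)) (at x within S)"
      unfolding mat_norm_def by (intro tendsto_intros) auto
    then show ?thesis
      by (simp add: mat_norm_def)
  qed
  ultimately have "((\<lambda>y. G i j y - G i j x) \<longlongrightarrow> 0) (at x within S)"
    by (rule Lim_null_comparison)
  then show "(G i j \<longlongrightarrow> G i j x) (at x within S)"
    by (simp add: LIM_zero_iff)
qed

lemma has_derivative_bilinear_vanishing:
  assumes B: "bounded_bilinear B" and f: "continuous (at x within S) f"
    and g: "(g has_derivative g') (at x within S)" and g0: "g x = 0"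
  shows "((\<lambda>y. B (f y) (g y)) has_derivative (\<lambda>h. B (f x) (g' h))) (at x within S)"
proof -
  interpret B: bounded_bilinear B by fact
  interpret G: bounded_linear g' by (rule has_derivative_bounded_linear[OF g])
  obtain K where K: "0 < K" and normB: "\<And>a b. norm (B a b) \<le> norm a * norm b * K"
    using B.pos_bounded by blast
  obtain KG where normG: "\<And>h. norm (g' h) \<le> norm h * KG"
    using G.nonneg_bounded by blast
  define Q where "Q y = norm (g y - g x - g' (y - x)) / norm (y - x)" for y
  define H where "H y = norm (f x) * Q y * K + norm (f y - f x) * (Q y + KG) * K" for y
  show ?thesis
  proof (rule has_derivativeI_sandwich[of 1 _ _ _ _ H])
    show "bounded_linear (\<lambda>h. B (f x) (g' h))"
      by (intro bounded_linear_compose[OF B.bounded_linear_right] G.bounded_linear)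
  next
    fix y assume "y \<noteq> x"
    define e where "e = y - x"
    define r where "r = g y - g x - g' e"
    have e: "norm e > 0" using \<open>y \<noteq> x\<close> by (simp add: e_def)
    have gy: "norm (g y) \<le> norm r + norm e * KG"
      using norm_triangle_ineq[of r "g' e"] normG[of e] by (simp add: r_def g0)
    have "norm (B (f y) (g y) - B (f x) (g x) - B (f x) (g' e))
        = norm (B (f x) r + B (f y - f x) (g y))"
      by (simp add: r_def g0 B.diff_left B.diff_right B.zero_right)
    also have "\<dots> \<le> norm (f x) * norm r * K + norm (f y - f x) * norm (g y) * K"
      by (rule order_trans[OF norm_triangle_ineq add_mono[OF normB normB]])
    also have "\<dots> \<le> norm (f x) * norm r * K + norm (f y - f x) * (norm r + norm e * KG) * K"
      using gy K by (intro add_left_mono mult_right_mono mult_left_mono) auto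
    also have "\<dots> = H y * norm e"
      using e by (simp add: H_def Q_def r_def e_def field_simps)
    finally show "norm (B (f y) (g y) - B (f x) (g x) - B (f x) (g' (y - x))) / norm (y - x) \<le> H y"
      using e by (simp add: e_def divide_le_eq)
  next
    have "(Q \<longlongrightarrow> 0) (at x within S)"
      using g unfolding has_derivative_iff_norm Q_def by simp
    moreover have "((\<lambda>y. f y - f x) \<longlongrightarrow> 0) (at x within S)"
      using f unfolding continuous_within by (simp add: LIM_zero)
    ultimately have "(H \<longlongrightarrow> norm (f x) * 0 * K + 0 * (0 + KG) * K) (at x within S)"
      unfolding H_def by (intro tendsto_intros) (auto simp: tendsto_norm_zero)
    then show "(H \<longlongrightarrow> 0) (at x within S)"
      by simp
  qed simp
qed

lemma C1_deriv_on_mat_inverse: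
  fixes F G :: "nat \<Rightarrow> nat \<Rightarrow> 'v::real_normed_vector \<Rightarrow> 'a::real_normed_algebra_1"
  assumes F: "\<And>k l. k < m \<Longrightarrow> l < m \<Longrightarrow> C1_deriv_on S (F k l) (F' k l)"
    and G: "\<And>k l. k < m \<Longrightarrow> l < m \<Longrightarrow> continuous_on S (G k l)"
    and inv: "\<And>x. x \<in> S \<Longrightarrow> mat_inverses m (\<lambda>i j. F i j x) (\<lambda>i j. G i j x)"
    and ij: "i < m" "j < m"
  shows "C1_deriv_on S (G i j)
    (\<lambda>x. - (\<Sum>k<m. \<Sum>l<m. blinfun_mult_right (G i k x) o\<^sub>L (blinfun_mult_left (G l j x) o\<^sub>L F' k l x)))"
  unfolding C1_deriv_on_def
proof safe
  fix x assume x: "x \<in> S"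
  have G_eq: "G i j y = G i j x - (\<Sum>k<m. \<Sum>l<m. G i k y * ((F k l y - F k l x) * G l j x))"
    if "y \<in> S" for y
    using mat_inverses_diff[of m "\<lambda>i j. F i j x" "\<lambda>i j. G i j x" "\<lambda>i j. G i j y" "\<lambda>i j. F i j y" i j]
      inv[OF x] inv[OF that] ij
    by (simp add: mat_inverses_def mat_mult_def sum_distrib_left algebra_simps)
  \<comment> \<open>Only continuity of \<open>G\<close> is known here; the factor \<open>F k l y - F k l x\<close> vanishes at \<open>x\<close>.\<close>
  have "((\<lambda>y. G i k y * ((F k l y - F k l x) * G l j x)) has_derivative
      (\<lambda>h. G i k x * (F' k l x h * G l j x))) (at x within S)" if "k < m" "l < m" for k l
  proof (rule has_derivative_bilinear_vanishing[OF bounded_bilinear_mult])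
    show "continuous (at x within S) (G i k)"
      using G[OF ij(1) that(1)] x by (simp add: continuous_on_eq_continuous_within)
    have "(F k l has_derivative blinfun_apply (F' k l x)) (at x within S)"
      using F[OF that] x unfolding C1_deriv_on_def by blast
    then show "((\<lambda>y. (F k l y - F k l x) * G l j x) has_derivative (\<lambda>h. F' k l x h * G l j x)) (at x within S)"
      by (auto intro!: derivative_eq_intros)
  qed simp
  then have "((\<lambda>y. G i j x - (\<Sum>k<m. \<Sum>l<m. G i k y * ((F k l y - F k l x) * G l j x))) has_derivative
      (\<lambda>h. 0 - (\<Sum>k<m. \<Sum>l<m. G i k x * (F' k l x h * G l j x)))) (at x within S)"
    by (intro has_derivative_diff has_derivative_const has_derivative_sum) auto
  then have "(G i j has_derivative (\<lambda>h. 0 - (\<Sum>k<m. \<Sum>l<m. G i k x * (F' k l x h * G l j x)))) (at x within S)"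
    by (rule has_derivative_transform_within[where d = 1]) (use x in \<open>auto intro: G_eq[symmetric]\<close>)
  then show "(G i j has_derivative blinfun_apply
      (- (\<Sum>k<m. \<Sum>l<m. blinfun_mult_right (G i k x) o\<^sub>L (blinfun_mult_left (G l j x) o\<^sub>L F' k l x))))
      (at x within S)"
    by (rule has_derivative_eq_rhs) (simp add: fun_eq_iff blinfun.sum_left blinfun.minus_left)
next
  have "continuous_on S (F' k l)" if "k < m" "l < m" for k l
    using F[OF that] unfolding C1_deriv_on_def by blast
  then show "continuous_on S
      (\<lambda>x. - (\<Sum>k<m. \<Sum>l<m. blinfun_mult_right (G i k x) o\<^sub>L (blinfun_mult_left (G l j x) o\<^sub>L F' k l x)))"
    using G ij
    by (intro continuous_on_minus continuous_on_sum
        bounded_bilinear.continuous_on[OF bounded_bilinear_blinfun_compose]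
        bounded_linear.continuous_on[OF bounded_linear_blinfun_mult_right]
        bounded_linear.continuous_on[OF bounded_linear_blinfun_mult_left]) auto
qed

lemma C2_on_mat_inverse:
  fixes F G :: "nat \<Rightarrow> nat \<Rightarrow> real ^ 'n \<Rightarrow> 'a::real_normed_algebra_1"
  assumes F: "\<And>k l. k < m \<Longrightarrow> l < m \<Longrightarrow> C2_on S (F k l)"
    and inv: "\<And>x. x \<in> S \<Longrightarrow> mat_inverses m (\<lambda>i j. F i j x) (\<lambda>i j. G i j x)"
    and bound: "\<And>x. x \<in> S \<Longrightarrow> mat_norm m (\<lambda>i j. G i j x) \<le> C"
    and ij: "i < m" "j < m"
  shows "C2_on S (G i j)"
proof -
  have "\<forall>k l. \<exists>f'. k < m \<longrightarrow> l < m \<longrightarrow> C1_deriv_on S (F k l) f' \<and> C1_on S f'"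
    using F by (meson C2_onE)
  then obtain F' where F': "\<And>k l. k < m \<Longrightarrow> l < m \<Longrightarrow> C1_deriv_on S (F k l) (F' k l) \<and> C1_on S (F' k l)"
    by metis
  have "continuous_on S (G k l)" if "k < m" "l < m" for k l
    by (rule continuous_on_mat_inverse[OF _ inv bound that]) (auto intro: C2_on_imp_continuous_on F)
  then have G: "C1_deriv_on S (G k l)
      (\<lambda>x. - (\<Sum>p<m. \<Sum>q<m. blinfun_mult_right (G k p x) o\<^sub>L (blinfun_mult_left (G q l x) o\<^sub>L F' p q x)))"
    if "k < m" "l < m" for k l
    using F' inv that by (intro C1_deriv_on_mat_inverse) auto
  then have "C1_on S (G k l)" if "k < m" "l < m" for k l
    using that unfolding C1_on_def by blast
  then have "C1_on S
      (\<lambda>x. - (\<Sum>p<m. \<Sum>q<m. blinfun_mult_right (G i p x) o\<^sub>L (blinfun_mult_left (G q j x) o\<^sub>L F' p q x)))"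
    using F' ij
    by (intro C1_on_minus C1_on_sum C1_on_bilinear[OF bounded_bilinear_blinfun_compose]
        C1_on_linear[OF bounded_linear_blinfun_mult_right] C1_on_linear[OF bounded_linear_blinfun_mult_left]
        finite_lessThan) auto
  with G[OF ij] show ?thesis
    by (rule C2_onI)
qed

section \<open>The simplex and the group \<open>GL0_C2\<close>\<close>

lemma scaleR_in_std_simplex:
  assumes x: "x \<in> std_simplex" and c: "0 \<le> c" "c \<le> 1"
  shows "c *\<^sub>R x \<in> std_simplex"
proof -
  have nonneg: "\<forall>i. 0 \<le> x $ i" and le1: "(\<Sum>i\<in>UNIV. x $ i) \<le> 1"
    using x by (auto simp: std_simplex_def)
  have "(\<Sum>i\<in>UNIV. (c *\<^sub>R x) $ i) = c * (\<Sum>i\<in>UNIV. x $ i)"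
    by (simp add: sum_distrib_left)
  also have "\<dots> \<le> 1"
    using c le1 nonneg by (intro mult_le_one) (auto intro!: sum_nonneg)
  finally show ?thesis
    using nonneg c by (simp add: std_simplex_def)
qed

lemma compact_std_simplex: "compact (std_simplex :: (real ^ 'n::finite) set)"
proof -
  have "closed (std_simplex :: (real ^ 'n) set)"
    unfolding std_simplex_def
    by (intro closed_Collect_conj closed_Collect_all closed_Collect_le continuous_intros)
  moreover have "std_simplex \<subseteq> cbox (0 :: real ^ 'n) 1"
  proof
    fix x :: "real ^ 'n" assume x: "x \<in> std_simplex"
    then have nonneg: "\<forall>i. 0 \<le> x $ i" and le1: "(\<Sum>i\<in>UNIV. x $ i) \<le> 1"
      by (auto simp: std_simplex_def)
    have "x $ i \<le> 1" for i
      using member_le_sum[of i UNIV "\<lambda>i. x $ i"] nonneg le1 by auto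
    then show "x \<in> cbox 0 1"
      using nonneg by (simp add: mem_box_cart)
  qed
  ultimately show ?thesis
    by (meson bounded_cbox bounded_subset compact_eq_bounded_closed)
qed

lemma GL0_C2_iff:
  "\<sigma> \<in> GL0_C2 m \<longleftrightarrow>
     (\<forall>i<m. \<forall>j<m. C2_on std_simplex (\<sigma> i j)) \<and> (\<forall>i<m. \<forall>j<m. \<sigma> i j 0 = mat_one i j) \<and>
     (\<exists>\<rho>. (\<forall>i<m. \<forall>j<m. C2_on std_simplex (\<rho> i j)) \<and>
          (\<forall>x\<in>std_simplex. mat_inverses m (\<lambda>i j. \<sigma> i j x) (\<lambda>i j. \<rho> i j x)))"
  by (simp add: GL0_C2_def mat_inverses_def mat_mult_def mat_one_def)

lemma GL0_C2_one: "(\<lambda>i j x. mat_one i j) \<in> GL0_C2 m"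
  unfolding GL0_C2_iff
  by (auto intro!: exI[of _ "\<lambda>i j x. mat_one i j"] C2_on_const simp: mat_inverses_def mat_mult_one_left)

lemma GL0_C2_mult:
  fixes \<sigma> \<sigma>' :: "nat \<Rightarrow> nat \<Rightarrow> real ^ 'n::finite \<Rightarrow> 'a::real_normed_algebra_1"
  assumes "\<sigma> \<in> GL0_C2 m" and "\<sigma>' \<in> GL0_C2 m"
  shows "(\<lambda>i j x. mat_mult m (\<lambda>i j. \<sigma> i j x) (\<lambda>i j. \<sigma>' i j x) i j) \<in> GL0_C2 m"
proof -
  obtain \<rho> \<rho>' where \<sigma>: "\<forall>i<m. \<forall>j<m. C2_on std_simplex (\<sigma> i j)" "\<forall>i<m. \<forall>j<m. \<sigma> i j 0 = mat_one i j"
    and \<sigma>': "\<forall>i<m. \<forall>j<m. C2_on std_simplex (\<sigma>' i j)" "\<forall>i<m. \<forall>j<m. \<sigma>' i j 0 = mat_one i j"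
    and \<rho>: "\<forall>i<m. \<forall>j<m. C2_on std_simplex (\<rho> i j)"
    and \<rho>': "\<forall>i<m. \<forall>j<m. C2_on std_simplex (\<rho>' i j)"
    and inv: "\<forall>x\<in>std_simplex. mat_inverses m (\<lambda>i j. \<sigma> i j x) (\<lambda>i j. \<rho> i j x)"
    and inv': "\<forall>x\<in>std_simplex. mat_inverses m (\<lambda>i j. \<sigma>' i j x) (\<lambda>i j. \<rho>' i j x)"
    using assms unfolding GL0_C2_iff by blast
  have C2_mult: "C2_on std_simplex (\<lambda>x. mat_mult m (\<lambda>i j. X i j x) (\<lambda>i j. Y i j x) i j)"
    if "\<forall>i<m. \<forall>j<m. C2_on std_simplex (X i j)" "\<forall>i<m. \<forall>j<m. C2_on std_simplex (Y i j)" "i < m" "j < m"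
    for X Y :: "nat \<Rightarrow> nat \<Rightarrow> real ^ 'n \<Rightarrow> 'a" and i j
    unfolding mat_mult_def using that by (intro C2_on_sum C2_on_mult) auto
  show ?thesis
    unfolding GL0_C2_iff
  proof (intro conjI allI impI exI[of _ "\<lambda>i j x. mat_mult m (\<lambda>i j. \<rho>' i j x) (\<lambda>i j. \<rho> i j x) i j"] ballI)
    fix i j assume ij: "i < m" "j < m"
    show "C2_on std_simplex (\<lambda>x. mat_mult m (\<lambda>i j. \<sigma> i j x) (\<lambda>i j. \<sigma>' i j x) i j)"
      by (rule C2_mult[OF \<sigma>(1) \<sigma>'(1) ij])
    show "C2_on std_simplex (\<lambda>x. mat_mult m (\<lambda>i j. \<rho>' i j x) (\<lambda>i j. \<rho> i j x) i j)"
      by (rule C2_mult[OF \<rho>' \<rho> ij])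
    have "mat_mult m (\<lambda>i j. \<sigma> i j 0) (\<lambda>i j. \<sigma>' i j 0) i j = mat_mult m mat_one mat_one i j"
      using \<sigma>(2) \<sigma>'(2) ij by (intro mat_mult_cong) auto
    then show "mat_mult m (\<lambda>i j. \<sigma> i j 0) (\<lambda>i j. \<sigma>' i j 0) i j = mat_one i j"
      using ij by (simp add: mat_mult_one_left)
  next
    fix x :: "real ^ 'n" assume "x \<in> std_simplex"
    then show "mat_inverses m (\<lambda>i j. mat_mult m (\<lambda>i j. \<sigma> i j x) (\<lambda>i j. \<sigma>' i j x) i j)
        (\<lambda>i j. mat_mult m (\<lambda>i j. \<rho>' i j x) (\<lambda>i j. \<rho> i j x) i j)"
      using inv inv' by (simp add: mat_inverses_mult)
  qed
qed

lemma GL0_C2_one_minus: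
  fixes A :: "nat \<Rightarrow> nat \<Rightarrow> real ^ 'n::finite \<Rightarrow> 'a::{banach,real_normed_algebra_1}"
  assumes A: "\<And>i j. i < m \<Longrightarrow> j < m \<Longrightarrow> C2_on std_simplex (A i j)"
    and A0: "\<And>i j. i < m \<Longrightarrow> j < m \<Longrightarrow> A i j 0 = 0"
    and small: "\<And>x. x \<in> std_simplex \<Longrightarrow> mat_norm m (\<lambda>i j. A i j x) \<le> q" and "q < 1"
  shows "(\<lambda>i j x. mat_one i j - A i j x) \<in> GL0_C2 m"
proof -
  let ?F = "\<lambda>i j x. mat_one i j - A i j x" and ?N = "\<lambda>i j x. mat_neumann m (\<lambda>i j. A i j x) i j"
  have q: "mat_norm m (\<lambda>i j. A i j x) < 1" if "x \<in> std_simplex" for x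
    using small[OF that] \<open>q < 1\<close> by linarith
  have inv: "mat_inverses m (\<lambda>i j. ?F i j x) (\<lambda>i j. ?N i j x)" if "x \<in> std_simplex" for x
    using mat_inverses_neumann[OF q[OF that]] by simp
  have "norm (?N i j x) \<le> real m / (1 - q)" if "x \<in> std_simplex" "i < m" "j < m" for x i j
  proof -
    have "norm (?N i j x) \<le> real m / (1 - mat_norm m (\<lambda>i j. A i j x))"
      by (rule norm_mat_neumann_le[OF q that(2,3)]) fact
    also have "\<dots> \<le> real m / (1 - q)"
      using small[OF that(1)] q[OF that(1)] \<open>q < 1\<close> by (intro divide_left_mono mult_pos_pos) auto
    finally show ?thesis .
  qed
  then have bound: "mat_norm m (\<lambda>i j. ?N i j x) \<le> real m * real m * (real m / (1 - q))"
    if "x \<in> std_simplex" for x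
    using that by (intro mat_norm_le_entrywise)
  have F: "C2_on std_simplex (?F i j)" if "i < m" "j < m" for i j
    using that by (intro C2_on_diff C2_on_const A)
  have "C2_on std_simplex (?N i j)" if "i < m" "j < m" for i j
    by (rule C2_on_mat_inverse[OF F inv bound that])
  then show ?thesis
    unfolding GL0_C2_iff using inv A0 F by (intro conjI exI[of _ ?N]) auto
qed

section \<open>Lifting along a partition of the rays\<close>

lemma uniformly_continuous_on_sum_dist:
  assumes "finite I" and "\<And>i. i \<in> I \<Longrightarrow> uniformly_continuous_on S (f i)" and "e > 0"
  shows "\<exists>d>0. \<forall>x\<in>S. \<forall>y\<in>S. dist y x < d \<longrightarrow> (\<Sum>i\<in>I. dist (f i y) (f i x)) < e"
  using assms
proof (induction I arbitrary: e rule: finite_induct)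
  case empty
  then show ?case by auto
next
  case (insert a I)
  obtain d1 where "d1 > 0" and d1: "\<forall>x\<in>S. \<forall>y\<in>S. dist y x < d1 \<longrightarrow> dist (f a y) (f a x) < e / 2"
    using insert.prems(1)[of a] \<open>e > 0\<close> unfolding uniformly_continuous_on_def by (meson half_gt_zero insertI1)
  obtain d2 where "d2 > 0" and d2: "\<forall>x\<in>S. \<forall>y\<in>S. dist y x < d2 \<longrightarrow> (\<Sum>i\<in>I. dist (f i y) (f i x)) < e / 2"
    using insert.IH[of "e / 2"] insert.prems \<open>e > 0\<close> by auto
  show ?case
    using \<open>d1 > 0\<close> \<open>d2 > 0\<close> d1 d2 insert.hyps
    by (intro exI[of _ "min d1 d2"]) (fastforce simp: field_simps)
qed

lemma mat_norm_diff_eq_sum_dist: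
  "mat_norm m (\<lambda>i j. X i j - Y i j) = (\<Sum>p\<in>{..<m} \<times> {..<m}. dist (X (fst p) (snd p)) (Y (fst p) (snd p)))"
  by (simp add: mat_norm_def dist_norm sum.cartesian_product split_def)

lemma exists_partition_small_increments:
  fixes \<tau> :: "nat \<Rightarrow> nat \<Rightarrow> 'v::real_normed_vector \<Rightarrow> 'b::real_normed_vector"
  assumes "compact S" and star: "\<And>x c. x \<in> S \<Longrightarrow> 0 \<le> c \<Longrightarrow> c \<le> 1 \<Longrightarrow> c *\<^sub>R x \<in> S"
    and \<tau>: "\<And>i j. i < m \<Longrightarrow> j < m \<Longrightarrow> continuous_on S (\<tau> i j)" and "e > 0"
  shows "\<exists>N>0. \<forall>k<N. \<forall>x\<in>S.
    mat_norm m (\<lambda>i j. \<tau> i j ((real k / real N) *\<^sub>R x) - \<tau> i j ((real (Suc k) / real N) *\<^sub>R x)) < e"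
proof -
  obtain M where "M > 0" and M: "\<And>x. x \<in> S \<Longrightarrow> norm x \<le> M"
    using compact_imp_bounded[OF \<open>compact S\<close>] by (auto simp: bounded_pos)
  have "\<exists>d>0. \<forall>x\<in>S. \<forall>y\<in>S. dist y x < d \<longrightarrow>
      (\<Sum>p\<in>{..<m} \<times> {..<m}. dist (\<tau> (fst p) (snd p) y) (\<tau> (fst p) (snd p) x)) < e"
    using \<open>e > 0\<close>
    by (intro uniformly_continuous_on_sum_dist) (auto intro!: compact_uniformly_continuous[OF \<tau> \<open>compact S\<close>])
  then obtain d where "d > 0" and d: "\<And>x y. x \<in> S \<Longrightarrow> y \<in> S \<Longrightarrow> dist y x < d \<Longrightarrow>
      (\<Sum>p\<in>{..<m} \<times> {..<m}. dist (\<tau> (fst p) (snd p) y) (\<tau> (fst p) (snd p) x)) < e"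
    by blast
  define N where "N = nat \<lceil>M / d\<rceil> + 1"
  have "N > 0" and "M / d < real N"
    unfolding N_def by linarith+
  then have Nd: "M / real N < d"
    using \<open>d > 0\<close> by (simp add: field_simps)
  have "mat_norm m (\<lambda>i j. \<tau> i j ((real k / real N) *\<^sub>R x) - \<tau> i j ((real (Suc k) / real N) *\<^sub>R x)) < e"
    if "k < N" "x \<in> S" for k x
  proof -
    have in_S: "(real k / real N) *\<^sub>R x \<in> S" "(real (Suc k) / real N) *\<^sub>R x \<in> S"
      using that by (auto intro!: star simp: field_simps)
    have "dist ((real k / real N) *\<^sub>R x) ((real (Suc k) / real N) *\<^sub>R x) = norm x / real N"
      by (simp add: dist_norm scaleR_diff_left[symmetric] diff_divide_distrib[symmetric] norm_minus_commute)
    also have "\<dots> \<le> M / real N"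
      using M[OF \<open>x \<in> S\<close>] by (simp add: divide_right_mono)
    finally show ?thesis
      unfolding mat_norm_diff_eq_sum_dist using Nd in_S by (intro d) auto
  qed
  with \<open>N > 0\<close> show ?thesis
    by blast
qed

text \<open>The factor by which a lift of \<open>\<tau>(t \<cdot>)\<close> is corrected to a lift of \<open>\<tau>(t' \<cdot>)\<close>
  (see \<open>GL0_C2_lift_step\<close>) is \<open>1 - lift_correction L m \<tau> \<rho> t t'\<close>, with \<open>L\<close> the section of \<open>\<phi>\<close>.\<close>
definition lift_correction ::
    "('b \<Rightarrow> 'a) \<Rightarrow> nat \<Rightarrow> (nat \<Rightarrow> nat \<Rightarrow> 'v::real_vector \<Rightarrow> 'b::ring) \<Rightarrow> (nat \<Rightarrow> nat \<Rightarrow> 'v \<Rightarrow> 'b) \<Rightarrow>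
      real \<Rightarrow> real \<Rightarrow> 'v \<Rightarrow> nat \<Rightarrow> nat \<Rightarrow> 'a" where
  "lift_correction L m \<tau> \<rho> t t' x =
     (\<lambda>i j. L (mat_mult m (\<lambda>i j. \<tau> i j (t *\<^sub>R x) - \<tau> i j (t' *\<^sub>R x)) (\<lambda>i j. \<rho> i j (t *\<^sub>R x)) i j))"

lemma exists_partition_small_lift_correction:
  fixes \<tau> \<rho> :: "nat \<Rightarrow> nat \<Rightarrow> 'v::real_normed_vector \<Rightarrow> 'b::real_normed_algebra"
    and L :: "'b \<Rightarrow> 'a::real_normed_vector"
  assumes "compact S" and star: "\<And>x c. x \<in> S \<Longrightarrow> 0 \<le> c \<Longrightarrow> c \<le> 1 \<Longrightarrow> c *\<^sub>R x \<in> S"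
    and \<tau>: "\<And>i j. i < m \<Longrightarrow> j < m \<Longrightarrow> continuous_on S (\<tau> i j)"
    and \<rho>: "\<And>i j. i < m \<Longrightarrow> j < m \<Longrightarrow> continuous_on S (\<rho> i j)"
    and L: "bounded_linear L"
  shows "\<exists>N>0. \<forall>k<N. \<forall>x\<in>S.
    mat_norm m (lift_correction L m \<tau> \<rho> (real k / real N) (real (Suc k) / real N) x) \<le> 1 / 2"
proof -
  obtain K where "K > 0" and K: "\<And>y. norm (L y) \<le> norm y * K"
    using bounded_linear.pos_bounded[OF L] by blast
  have "continuous_on S (\<lambda>x. mat_norm m (\<lambda>i j. \<rho> i j x))"
    unfolding mat_norm_def using \<rho> by (intro continuous_intros) auto
  then have "bounded ((\<lambda>x. mat_norm m (\<lambda>i j. \<rho> i j x)) ` S)"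
    by (intro compact_imp_bounded compact_continuous_image \<open>compact S\<close>)
  then obtain R where "R > 0" and R: "\<And>x. x \<in> S \<Longrightarrow> mat_norm m (\<lambda>i j. \<rho> i j x) \<le> R"
    unfolding bounded_pos by force
  have "\<exists>N>0. \<forall>k<N. \<forall>x\<in>S.
      mat_norm m (\<lambda>i j. \<tau> i j ((real k / real N) *\<^sub>R x) - \<tau> i j ((real (Suc k) / real N) *\<^sub>R x)) < 1 / (2 * K * R)"
    using \<open>K > 0\<close> \<open>R > 0\<close> by (intro exists_partition_small_increments \<open>compact S\<close> star \<tau>) auto
  then obtain N where "N > 0" and N: "\<And>k x. k < N \<Longrightarrow> x \<in> S \<Longrightarrow>
      mat_norm m (\<lambda>i j. \<tau> i j ((real k / real N) *\<^sub>R x) - \<tau> i j ((real (Suc k) / real N) *\<^sub>R x)) < 1 / (2 * K * R)"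
    by blast
  have "mat_norm m (lift_correction L m \<tau> \<rho> (real k / real N) (real (Suc k) / real N) x) \<le> 1 / 2"
    if "k < N" "x \<in> S" for k x
  proof -
    let ?y = "(real k / real N) *\<^sub>R x"
    let ?D = "\<lambda>i j. \<tau> i j ?y - \<tau> i j ((real (Suc k) / real N) *\<^sub>R x)"
    have "?y \<in> S"
      using that by (intro star) auto
    have "mat_norm m (lift_correction L m \<tau> \<rho> (real k / real N) (real (Suc k) / real N) x)
        \<le> K * mat_norm m (mat_mult m ?D (\<lambda>i j. \<rho> i j ?y))"
      unfolding lift_correction_def by (rule mat_norm_map_le[OF K])
    also have "\<dots> \<le> K * (mat_norm m ?D * mat_norm m (\<lambda>i j. \<rho> i j ?y))"
      using \<open>K > 0\<close> by (intro mult_left_mono[OF mat_norm_mult_le]) simp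
    also have "\<dots> \<le> K * (1 / (2 * K * R) * R)"
      using N[OF that] R[OF \<open>?y \<in> S\<close>] \<open>K > 0\<close> \<open>R > 0\<close>
      by (intro mult_left_mono[OF mult_mono]) (simp_all add: mat_norm_nonneg)
    also have "\<dots> = 1 / 2"
      using \<open>K > 0\<close> \<open>R > 0\<close> by simp
    finally show ?thesis .
  qed
  with \<open>N > 0\<close> show ?thesis
    by blast
qed

lemma mat_mult_one_minus_diff_mult:
  fixes R T T' :: "nat \<Rightarrow> nat \<Rightarrow> 'a::ring_1"
  assumes RT: "\<And>i j. i < m \<Longrightarrow> j < m \<Longrightarrow> mat_mult m R T i j = mat_one i j" and ij: "i < m" "j < m"
  shows "mat_mult m (\<lambda>i j. mat_one i j - mat_mult m (\<lambda>i j. T i j - T' i j) R i j) T i j = T' i j"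
proof -
  have "mat_mult m (\<lambda>i j. mat_one i j - mat_mult m (\<lambda>i j. T i j - T' i j) R i j) T i j
      = T i j - mat_mult m (\<lambda>i j. T i j - T' i j) (mat_mult m R T) i j"
    using ij by (simp add: mat_mult_diff_left mat_mult_one_left mat_mult_assoc)
  also have "\<dots> = T i j - mat_mult m (\<lambda>i j. T i j - T' i j) mat_one i j"
    using RT ij by (simp cong: mat_mult_cong)
  also have "\<dots> = T' i j"
    using ij by (simp add: mat_mult_one_right)
  finally show ?thesis .
qed

lemma GL0_C2_lift_step:
  fixes \<phi> :: "'a::{banach, real_normed_algebra_1} \<Rightarrow> 'b::real_normed_algebra_1"
    and \<tau> \<rho> :: "nat \<Rightarrow> nat \<Rightarrow> real ^ 'n::finite \<Rightarrow> 'b" and \<sigma> :: "nat \<Rightarrow> nat \<Rightarrow> real ^ 'n \<Rightarrow> 'a"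
  assumes \<phi>: "bounded_linear \<phi>" "\<And>x y. \<phi> (x * y) = \<phi> x * \<phi> y" "\<phi> 1 = 1"
    and s: "bounded_linear s" "\<And>b. \<phi> (s b) = b"
    and \<tau>: "\<And>i j. i < m \<Longrightarrow> j < m \<Longrightarrow> C2_on std_simplex (\<tau> i j)"
    and \<rho>: "\<And>i j. i < m \<Longrightarrow> j < m \<Longrightarrow> C2_on std_simplex (\<rho> i j)"
    and \<rho>\<tau>: "\<And>x i j. x \<in> std_simplex \<Longrightarrow> i < m \<Longrightarrow> j < m \<Longrightarrow>
      mat_mult m (\<lambda>i j. \<rho> i j x) (\<lambda>i j. \<tau> i j x) i j = mat_one i j"
    and t: "0 \<le> t" "t \<le> 1" and t': "0 \<le> t'" "t' \<le> 1"
    and small: "\<And>x. x \<in> std_simplex \<Longrightarrow> mat_norm m (lift_correction s m \<tau> \<rho> t t' x) \<le> 1 / 2"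
    and \<sigma>: "\<sigma> \<in> GL0_C2 m"
    and lift: "\<And>i j x. i < m \<Longrightarrow> j < m \<Longrightarrow> x \<in> std_simplex \<Longrightarrow> \<phi> (\<sigma> i j x) = \<tau> i j (t *\<^sub>R x)"
  shows "\<exists>\<sigma>' \<in> GL0_C2 m. \<forall>i<m. \<forall>j<m. \<forall>x\<in>std_simplex. \<phi> (\<sigma>' i j x) = \<tau> i j (t' *\<^sub>R x)"
proof -
  interpret \<phi>: bounded_linear \<phi> by fact
  interpret s: bounded_linear s by fact
  define A where "A i j x = lift_correction s m \<tau> \<rho> t t' x i j" for i j x
  have A: "C2_on std_simplex (A i j)" if "i < m" "j < m" for i j
    unfolding A_def lift_correction_def mat_mult_def using that t t'
    by (intro C2_on_linear[OF s(1)] C2_on_sum C2_on_mult C2_on_diff C2_on_compose_scaleR[OF \<tau>]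
        C2_on_compose_scaleR[OF \<rho>] scaleR_in_std_simplex) auto
  have A0: "A i j 0 = 0" for i j
    by (simp add: A_def lift_correction_def mat_mult_def s.zero)
  have "mat_norm m (\<lambda>i j. A i j x) \<le> 1 / 2" if "x \<in> std_simplex" for x
    using small[OF that] by (simp add: A_def)
  then have F: "(\<lambda>i j x. mat_one i j - A i j x) \<in> GL0_C2 m"
    using A A0 by (intro GL0_C2_one_minus[where q = "1 / 2"]) auto
  have lifted: "\<phi> (mat_mult m (\<lambda>i j. mat_one i j - A i j x) (\<lambda>i j. \<sigma> i j x) i j) = \<tau> i j (t' *\<^sub>R x)"
    if ij: "i < m" "j < m" and x: "x \<in> std_simplex" for i j x
  proof -
    have "\<phi> (mat_one i j) = mat_one i j" for i j
      by (simp add: mat_one_def \<phi>(3) \<phi>.zero)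
    then have "\<phi> (mat_mult m (\<lambda>i j. mat_one i j - A i j x) (\<lambda>i j. \<sigma> i j x) i j)
        = mat_mult m (\<lambda>i j. mat_one i j - mat_mult m (\<lambda>i j. \<tau> i j (t *\<^sub>R x) - \<tau> i j (t' *\<^sub>R x))
            (\<lambda>i j. \<rho> i j (t *\<^sub>R x)) i j) (\<lambda>i j. \<tau> i j (t *\<^sub>R x)) i j"
      using lift x ij
      by (simp add: mat_mult_map[OF \<phi>(1,2)] \<phi>.diff A_def lift_correction_def s(2) cong: mat_mult_cong)
    also have "\<dots> = \<tau> i j (t' *\<^sub>R x)"
      using \<rho>\<tau>[OF scaleR_in_std_simplex[OF x t]] ij by (rule mat_mult_one_minus_diff_mult)
    finally show ?thesis .
  qed
  show ?thesis
    by (rule bexI[OF _ GL0_C2_mult[OF F \<sigma>]]) (simp add: lifted)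
qed

lemma GL0_C2_lift_along_partition:
  fixes \<phi> :: "'a::{banach, real_normed_algebra_1} \<Rightarrow> 'b::real_normed_algebra_1"
    and \<tau> \<rho> :: "nat \<Rightarrow> nat \<Rightarrow> real ^ 'n::finite \<Rightarrow> 'b"
  assumes \<phi>: "bounded_linear \<phi>" "\<And>x y. \<phi> (x * y) = \<phi> x * \<phi> y" "\<phi> 1 = 1"
    and s: "bounded_linear s" "\<And>b. \<phi> (s b) = b"
    and \<tau>: "\<And>i j. i < m \<Longrightarrow> j < m \<Longrightarrow> C2_on std_simplex (\<tau> i j)"
    and \<tau>0: "\<And>i j. i < m \<Longrightarrow> j < m \<Longrightarrow> \<tau> i j 0 = mat_one i j"
    and \<rho>: "\<And>i j. i < m \<Longrightarrow> j < m \<Longrightarrow> C2_on std_simplex (\<rho> i j)"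
    and \<rho>\<tau>: "\<And>x i j. x \<in> std_simplex \<Longrightarrow> i < m \<Longrightarrow> j < m \<Longrightarrow>
      mat_mult m (\<lambda>i j. \<rho> i j x) (\<lambda>i j. \<tau> i j x) i j = mat_one i j"
    and "N > 0"
    and small: "\<And>k x. k < N \<Longrightarrow> x \<in> std_simplex \<Longrightarrow>
      mat_norm m (lift_correction s m \<tau> \<rho> (real k / real N) (real (Suc k) / real N) x) \<le> 1 / 2"
  shows "\<exists>\<sigma> \<in> GL0_C2 m. \<forall>i<m. \<forall>j<m. \<forall>x\<in>std_simplex. \<phi> (\<sigma> i j x) = \<tau> i j x"
proof -
  have "\<exists>\<sigma> \<in> GL0_C2 m. \<forall>i<m. \<forall>j<m. \<forall>x\<in>std_simplex. \<phi> (\<sigma> i j x) = \<tau> i j ((real k / real N) *\<^sub>R x)"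
    if "k \<le> N" for k
    using that
  proof (induction k)
    case 0
    have "\<phi> (mat_one i j) = \<tau> i j 0" if "i < m" "j < m" for i j
      using \<tau>0[OF that] by (simp add: mat_one_def \<phi>(3) linear_0[OF bounded_linear.linear[OF \<phi>(1)]])
    then show ?case
      using GL0_C2_one by fastforce
  next
    case (Suc k)
    then obtain \<sigma> where \<sigma>: "\<sigma> \<in> GL0_C2 m"
      and lift: "\<forall>i<m. \<forall>j<m. \<forall>x\<in>std_simplex. \<phi> (\<sigma> i j x) = \<tau> i j ((real k / real N) *\<^sub>R x)"
      by auto
    from Suc.prems have "k < N"
      by simp
    then show ?case
      by (intro GL0_C2_lift_step[OF \<phi> s \<tau> \<rho> \<rho>\<tau> _ _ _ _ small \<sigma> lift[rule_format]]) simp_all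
  qed
  from this[of N] show ?thesis
    using \<open>N > 0\<close> by simp
qed

theorem mainTheorem5:
  fixes \<phi> :: "'a::{banach, real_normed_algebra_1} \<Rightarrow> 'b::{banach, real_normed_algebra_1}"
    and s :: "'b \<Rightarrow> 'a"
  assumes phi_bl: "bounded_linear \<phi>"
    and phi_mult: "\<And>x y. \<phi> (x * y) = \<phi> x * \<phi> y"
    and phi_one: "\<phi> 1 = 1"
    and s_bl: "bounded_linear s"
    and s_section: "\<And>b. \<phi> (s b) = b"
  shows "\<forall>m. \<forall>\<tau> \<in> (GL0_C2 m :: (nat \<Rightarrow> nat \<Rightarrow> real ^ 'n::finite \<Rightarrow> 'b) set).
           \<exists>\<sigma> \<in> (GL0_C2 m :: (nat \<Rightarrow> nat \<Rightarrow> real ^ 'n \<Rightarrow> 'a) set).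
             \<forall>i<m. \<forall>j<m. \<forall>x\<in>(std_simplex :: (real ^ 'n) set). \<phi> (\<sigma> i j x) = \<tau> i j x"
proof (intro allI ballI)
  fix m and \<tau> :: "nat \<Rightarrow> nat \<Rightarrow> real ^ 'n \<Rightarrow> 'b"
  assume "\<tau> \<in> GL0_C2 m"
  then obtain \<rho> where \<tau>: "\<forall>i<m. \<forall>j<m. C2_on std_simplex (\<tau> i j)" "\<forall>i<m. \<forall>j<m. \<tau> i j 0 = mat_one i j"
    and \<rho>: "\<forall>i<m. \<forall>j<m. C2_on std_simplex (\<rho> i j)"
    and inv: "\<forall>x\<in>std_simplex. mat_inverses m (\<lambda>i j. \<tau> i j x) (\<lambda>i j. \<rho> i j x)"
    unfolding GL0_C2_iff by blast
  have "\<exists>N>0. \<forall>k<N. \<forall>x\<in>std_simplex.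
      mat_norm m (lift_correction s m \<tau> \<rho> (real k / real N) (real (Suc k) / real N) x) \<le> 1 / 2"
    using \<tau>(1) \<rho>
    by (intro exists_partition_small_lift_correction compact_std_simplex scaleR_in_std_simplex s_bl)
       (auto intro: C2_on_imp_continuous_on)
  then obtain N where "N > 0" and small: "\<forall>k<N. \<forall>x\<in>std_simplex.
      mat_norm m (lift_correction s m \<tau> \<rho> (real k / real N) (real (Suc k) / real N) x) \<le> 1 / 2"
    by blast
  show "\<exists>\<sigma> \<in> GL0_C2 m. \<forall>i<m. \<forall>j<m. \<forall>x\<in>std_simplex. \<phi> (\<sigma> i j x) = \<tau> i j x"
    by (rule GL0_C2_lift_along_partition[where \<tau> = \<tau> and \<rho> = \<rho>,
          OF phi_bl phi_mult phi_one s_bl s_section _ _ _ _ \<open>N > 0\<close> small[rule_format]])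
       (use \<tau> \<rho> inv in \<open>auto simp: mat_inverses_def\<close>)
qed

end
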